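(* Let $F$ be an infinite field and $n\ge2$. Let $z_1,\dots,z_k$ be distinct variables of nonzero degrees $g_1,\dots,g_k\in\{1,\dots,n-1\}$ with $g_1+\dots+g_k\le n-1$, and let $y_1,\dots,y_k,y$ be variables of degree $0$. Let $f=[z_1,y_1,z_2,y_2,\dots,z_k,y_k]$. Then for every $1\le i\le k$, $$[z_1,y_1,\dots,z_{i-1},y_{i-1},z_i,y,y_i,z_{i+1},y_{i+1},\dots,z_k,y_k]\in\langle\{f\}\cup I\rangle_{T_{\mathbb{Z}_n}}.$$
   Context: $UT_n(F)^{(-)}$: $n\times n$ upper triangular matrices with bracket $[a,b]=ab-ba$ and canonical $\mathbb{Z}_n$-grading (degree-$k$ component spanned by $e_{ij}$ with $j-i=k$); elements of $\mathbb{Z}_n\setminus\{0\}$ are identified with $1,\dots,n-1$. $I$ is its $T_{\mathbb{Z}_n}$-ideal of graded identities in the free $\mathbb{Z}_n$-graded Lie algebra $\mathcal{L}_{\mathbb{Z}_n}$ (countably many variables of each degree). Commutators are left normed; $\langle S\rangle_{T_{\mathbb{Z}_n}}$ is the smallest graded ideal containing $S$ invariant under degree-preserving endomorphisms. *)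

theory Defs
  imports Main
begin

text \<open>Variables of the free Z_n-graded Lie algebra: a variable is a pair (d, j);
  its Z_n-degree is d mod n. Hence there are countably many variables of every degree.
  The free Lie algebra is realised (Witt's theorem) as the Lie subalgebra of Lie
  polynomials inside the free associative algebra F<X>, whose elements are
  functions from words (lists of variables) to F with finite support.\<close>

type_synonym var = "nat \<times> nat"
type_synonym 'a ncpoly = "var list \<Rightarrow> 'a"

definition gdeg :: "nat \<Rightarrow> var \<Rightarrow> nat" where
  "gdeg n x = fst x mod n"

definition wdeg :: "nat \<Rightarrow> var list \<Rightarrow> nat" where
  "wdeg n w = (\<Sum>x\<leftarrow>w. fst x) mod n"

definition pvar :: "var \<Rightarrow> 'a::field ncpoly" where
  "pvar x = (\<lambda>w. if w = [x] then 1 else 0)"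

definition pone :: "'a::field ncpoly" where
  "pone = (\<lambda>w. if w = [] then 1 else 0)"

definition padd :: "'a::field ncpoly \<Rightarrow> 'a ncpoly \<Rightarrow> 'a ncpoly" where
  "padd p q = (\<lambda>w. p w + q w)"

definition psmult :: "'a::field \<Rightarrow> 'a ncpoly \<Rightarrow> 'a ncpoly" where
  "psmult c p = (\<lambda>w. c * p w)"

definition pmul :: "'a::field ncpoly \<Rightarrow> 'a ncpoly \<Rightarrow> 'a ncpoly" where
  "pmul p q = (\<lambda>w. \<Sum>k\<le>length w. p (take k w) * q (drop k w))"

definition pbr :: "'a::field ncpoly \<Rightarrow> 'a ncpoly \<Rightarrow> 'a ncpoly" where
  "pbr p q = (\<lambda>w. pmul p q w - pmul q p w)"

inductive_set LieP :: "'a::field ncpoly set" where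
  LieP_var: "pvar x \<in> LieP"
| LieP_zero: "(\<lambda>w. 0) \<in> LieP"
| LieP_add: "p \<in> LieP \<Longrightarrow> q \<in> LieP \<Longrightarrow> padd p q \<in> LieP"
| LieP_smult: "p \<in> LieP \<Longrightarrow> psmult c p \<in> LieP"
| LieP_br: "p \<in> LieP \<Longrightarrow> q \<in> LieP \<Longrightarrow> pbr p q \<in> LieP"

fun lnc :: "'a::field ncpoly list \<Rightarrow> 'a ncpoly" where
  "lnc [] = (\<lambda>w. 0)"
| "lnc (p # ps) = foldl pbr p ps"

definition hcomp :: "nat \<Rightarrow> nat \<Rightarrow> 'a::field ncpoly \<Rightarrow> 'a ncpoly" where
  "hcomp n d p = (\<lambda>w. if wdeg n w = d then p w else 0)"

fun wprod :: "(var \<Rightarrow> 'a::field ncpoly) \<Rightarrow> var list \<Rightarrow> 'a ncpoly" where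
  "wprod \<sigma> [] = pone"
| "wprod \<sigma> (x # w) = pmul (\<sigma> x) (wprod \<sigma> w)"

definition psubst :: "(var \<Rightarrow> 'a::field ncpoly) \<Rightarrow> 'a ncpoly \<Rightarrow> 'a ncpoly" where
  "psubst \<sigma> p = (\<lambda>u. \<Sum>w\<in>{w. p w \<noteq> 0}. p w * wprod \<sigma> w u)"

definition graded_endo :: "nat \<Rightarrow> (var \<Rightarrow> 'a::field ncpoly) \<Rightarrow> bool" where
  "graded_endo n \<sigma> \<longleftrightarrow> (\<forall>x. \<sigma> x \<in> LieP \<and> hcomp n (gdeg n x) (\<sigma> x) = \<sigma> x)"

definition is_Tideal :: "nat \<Rightarrow> 'a::field ncpoly set \<Rightarrow> bool" where
  "is_Tideal n J \<longleftrightarrow>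
     J \<subseteq> LieP \<and> (\<lambda>w. 0) \<in> J \<and>
     (\<forall>p\<in>J. \<forall>q\<in>J. padd p q \<in> J) \<and>
     (\<forall>p\<in>J. \<forall>c. psmult c p \<in> J) \<and>
     (\<forall>p\<in>J. \<forall>q\<in>LieP. pbr p q \<in> J) \<and>
     (\<forall>p\<in>J. \<forall>d. hcomp n d p \<in> J) \<and>
     (\<forall>p\<in>J. \<forall>\<sigma>. graded_endo n \<sigma> \<longrightarrow> psubst \<sigma> p \<in> J)"

definition Tideal_gen :: "nat \<Rightarrow> 'a::field ncpoly set \<Rightarrow> 'a ncpoly set" where
  "Tideal_gen n S = \<Inter>{J. is_Tideal n J \<and> S \<subseteq> J}"

text \<open>n x n matrices (entries outside {0..<n}^2 are zero); UT_n with canonical grading.\<close>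
type_synonym 'a mat = "nat \<Rightarrow> nat \<Rightarrow> 'a"

definition mmul :: "nat \<Rightarrow> 'a::field mat \<Rightarrow> 'a mat \<Rightarrow> 'a mat" where
  "mmul n A B = (\<lambda>i j. \<Sum>l<n. A i l * B l j)"

definition mone :: "nat \<Rightarrow> 'a::field mat" where
  "mone n = (\<lambda>i j. if i = j \<and> i < n then 1 else 0)"

definition UT_hom :: "nat \<Rightarrow> nat \<Rightarrow> 'a::field mat \<Rightarrow> bool" where
  "UT_hom n k A \<longleftrightarrow> (\<forall>i j. A i j \<noteq> 0 \<longrightarrow> i < n \<and> j < n \<and> i \<le> j \<and> j - i = k)"

definition graded_assign :: "nat \<Rightarrow> (var \<Rightarrow> 'a::field mat) \<Rightarrow> bool" where
  "graded_assign n \<psi> \<longleftrightarrow> (\<forall>x. UT_hom n (gdeg n x) (\<psi> x))"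

fun wmat :: "nat \<Rightarrow> (var \<Rightarrow> 'a::field mat) \<Rightarrow> var list \<Rightarrow> 'a mat" where
  "wmat n \<psi> [] = mone n"
| "wmat n \<psi> (x # w) = mmul n (\<psi> x) (wmat n \<psi> w)"

text \<open>Evaluation of a (Lie) polynomial; the bracket of UT_n^(-) is ab - ba, so the
  associative evaluation of a Lie polynomial equals its Lie evaluation.\<close>
definition meval :: "nat \<Rightarrow> (var \<Rightarrow> 'a::field mat) \<Rightarrow> 'a ncpoly \<Rightarrow> 'a mat" where
  "meval n \<psi> p = (\<lambda>i j. \<Sum>w\<in>{w. p w \<noteq> 0}. p w * wmat n \<psi> w i j)"

definition UT_ids :: "nat \<Rightarrow> 'a::field ncpoly set" where
  "UT_ids n = {p \<in> LieP. \<forall>\<psi>. graded_assign n \<psi> \<longrightarrow> meval n \<psi> p = (\<lambda>i j. 0)}"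

end

theory Submission
  imports Defs
begin

text \<open>Since y has degree 0, replacing a single variable x of f by [x, y] is a degree-preserving
  endomorphism, so each such substitution instance of f lies in the T-ideal generated by f.
  By the Jacobi identity, ad y is a derivation, hence
  [[x_1, ..., x_m], y] = \<Sum>_j [x_1, ..., [x_j, y], ..., x_m];
  bracketing with the remaining variables of f on the right and taking m = 2i - 1 exhibits the
  wanted commutator as a sum of substitution instances of f.\<close>

definition psupp :: "'a::field ncpoly \<Rightarrow> var list set" where
  "psupp p = {w. p w \<noteq> 0}"

definition shiftp :: "var \<Rightarrow> 'a::field ncpoly \<Rightarrow> 'a ncpoly" where
  "shiftp x p = (\<lambda>u. p (x # u))"

lemma pmul_Nil: "pmul p q [] = p [] * q []"
  by (simp add: pmul_def)

lemma pmul_Cons: "pmul p q (x # w) = p [] * q (x # w) + pmul (shiftp x p) q w"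
  unfolding pmul_def shiftp_def
  by (simp add: sum.atMost_Suc_shift del: sum.atMost_Suc)

lemma pmul_add_left: "pmul (\<lambda>u. f u + g u) h w = pmul f h w + pmul g h w"
  unfolding pmul_def by (simp add: sum.distrib algebra_simps)

lemma pmul_diff_left: "pmul (\<lambda>u. f u - g u) h w = pmul f h w - pmul g h w"
  unfolding pmul_def by (simp add: sum_subtractf algebra_simps)

lemma pmul_diff_right: "pmul h (\<lambda>u. f u - g u) w = pmul h f w - pmul h g w"
  unfolding pmul_def by (simp add: sum_subtractf algebra_simps)

lemma pmul_smult_left: "pmul (\<lambda>u. a * f u) h w = a * pmul f h w"
  unfolding pmul_def by (simp add: sum_distrib_left algebra_simps)

lemma pmul_smult_right: "pmul h (\<lambda>u. a * f u) w = a * pmul h f w"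
  unfolding pmul_def by (simp add: sum_distrib_left algebra_simps)

lemma pmul_sum_left: "pmul (\<lambda>u. \<Sum>j\<in>A. f j u) q w = (\<Sum>j\<in>A. pmul (f j) q w)"
  unfolding pmul_def by (simp add: sum_distrib_right) (rule sum.swap)

lemma pmul_sum_right: "pmul p (\<lambda>u. \<Sum>j\<in>A. f j u) w = (\<Sum>j\<in>A. pmul p (f j) w)"
  unfolding pmul_def by (simp add: sum_distrib_left) (rule sum.swap)

lemma pmul_assoc_pointwise: "pmul (pmul p q) r w = pmul p (pmul q r) w"
proof (induction w arbitrary: p)
  case Nil
  then show ?case by (simp add: pmul_Nil)
next
  case (Cons x w)
  have shift: "shiftp x (pmul p q) = (\<lambda>u. p [] * shiftp x q u + pmul (shiftp x p) q u)"
    by (rule ext) (simp add: shiftp_def pmul_Cons)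
  have "pmul (pmul p q) r (x # w)
      = p [] * q [] * r (x # w) + p [] * pmul (shiftp x q) r w + pmul (pmul (shiftp x p) q) r w"
    by (simp add: pmul_Cons shift pmul_add_left pmul_smult_left pmul_Nil)
  also have "\<dots> = pmul p (pmul q r) (x # w)"
    by (simp add: Cons.IH pmul_Cons algebra_simps)
  finally show ?case .
qed

lemma pmul_assoc: "pmul (pmul p q) r = pmul p (pmul q r)"
  by (rule ext) (rule pmul_assoc_pointwise)

lemma pmul_pone_left: "pmul pone p = p"
proof (rule ext)
  fix w
  have shift: "shiftp x pone = (\<lambda>u. 0)" for x
    by (rule ext) (simp add: shiftp_def pone_def)
  show "pmul pone p w = p w"
    by (cases w) (simp_all add: pmul_Nil pmul_Cons shift pmul_def[of "\<lambda>u. 0"], simp_all add: pone_def)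
qed

lemma pmul_pone_right: "pmul p pone = p"
proof (rule ext)
  show "pmul p pone w = p w" for w
    by (induction w arbitrary: p) (simp_all add: pmul_Nil pmul_Cons pone_def shiftp_def)
qed

lemma pmul_nonzero_split: "pmul p q w \<noteq> 0 \<Longrightarrow> \<exists>a b. w = a @ b \<and> p a \<noteq> 0 \<and> q b \<noteq> 0"
  unfolding pmul_def
  by (metis (no_types, lifting) append_take_drop_id mult_eq_0_iff sum.neutral)

lemma psupp_pmul_subset: "psupp (pmul p q) \<subseteq> (\<lambda>x. fst x @ snd x) ` (psupp p \<times> psupp q)"
proof
  fix w assume "w \<in> psupp (pmul p q)"
  then obtain a b where "w = a @ b" "p a \<noteq> 0" "q b \<noteq> 0"
    unfolding psupp_def using pmul_nonzero_split by blast
  then show "w \<in> (\<lambda>x. fst x @ snd x) ` (psupp p \<times> psupp q)"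
    unfolding psupp_def by (auto intro!: image_eqI[of _ _ "(a, b)"])
qed

lemma finite_psupp_pmul:
  "finite (psupp p) \<Longrightarrow> finite (psupp q) \<Longrightarrow> finite (psupp (pmul p q))"
  using psupp_pmul_subset[of p q] by (rule finite_subset) simp

lemma finite_psupp_pbr:
  assumes "finite (psupp p)" "finite (psupp q)"
  shows "finite (psupp (pbr p q))"
proof (rule finite_subset)
  show "psupp (pbr p q) \<subseteq> psupp (pmul p q) \<union> psupp (pmul q p)"
    unfolding psupp_def pbr_def by auto
qed (use assms finite_psupp_pmul in blast)

lemma finite_psupp_pvar: "finite (psupp (pvar x))"
proof (rule finite_subset)
  show "psupp (pvar x) \<subseteq> {[x]}"
    unfolding psupp_def pvar_def by auto
qed simp

lemma pbr_sum_left: "pbr (\<lambda>u. \<Sum>j\<in>A. f j u) q = (\<lambda>w. \<Sum>j\<in>A. pbr (f j) q w)"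
  unfolding pbr_def by (simp add: pmul_sum_left pmul_sum_right sum_subtractf)

lemma foldl_pbr_sum_left:
  "foldl pbr (\<lambda>u. \<Sum>j\<in>A. f j u) qs = (\<lambda>w. \<Sum>j\<in>A. foldl pbr (f j) qs w)"
  by (induction qs arbitrary: f) (simp_all add: pbr_sum_left)

lemma pbr_jacobi: "pbr (pbr a b) c = padd (pbr (pbr a c) b) (pbr a (pbr b c))"
  unfolding pbr_def padd_def
  by (rule ext) (simp add: pmul_diff_left pmul_diff_right pmul_assoc_pointwise)

lemma pmul_eq_sum_pairs:
  assumes "finite A" "finite B" "psupp p \<subseteq> A" "psupp q \<subseteq> B"
  shows "pmul p q w = (\<Sum>x\<in>{x\<in>A \<times> B. fst x @ snd x = w}. p (fst x) * q (snd x))"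
proof -
  let ?split = "\<lambda>k. (take k w, drop k w)"
  have inj: "inj_on ?split {..length w}"
    by (rule inj_onI) (metis atMost_iff length_take min.absorb2 prod.inject)
  have "pmul p q w = (\<Sum>x\<in>?split ` {..length w}. p (fst x) * q (snd x))"
    unfolding pmul_def by (simp add: sum.reindex[OF inj])
  also have "\<dots> = (\<Sum>x\<in>{x\<in>A \<times> B. fst x @ snd x = w}. p (fst x) * q (snd x))"
  proof (rule sum.mono_neutral_right)
    show "{x\<in>A \<times> B. fst x @ snd x = w} \<subseteq> ?split ` {..length w}"
    proof
      fix x assume "x \<in> {x\<in>A \<times> B. fst x @ snd x = w}"
      then show "x \<in> ?split ` {..length w}"
        by (intro image_eqI[of _ _ "length (fst x)"]) auto
    qed
    show "\<forall>x\<in>?split ` {..length w} - {x\<in>A \<times> B. fst x @ snd x = w}. p (fst x) * q (snd x) = 0"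
      using assms(3,4) unfolding psupp_def by auto
  qed simp
  finally show ?thesis .
qed

lemma psubst_eq_sum:
  assumes "finite T" "psupp p \<subseteq> T"
  shows "psubst \<sigma> p u = (\<Sum>w\<in>T. p w * wprod \<sigma> w u)"
  unfolding psubst_def
  by (rule sum.mono_neutral_left) (use assms in \<open>auto simp: psupp_def\<close>)

lemma wprod_append: "wprod \<sigma> (a @ b) = pmul (wprod \<sigma> a) (wprod \<sigma> b)"
  by (induction a) (simp_all add: pmul_pone_left pmul_assoc)

lemma psubst_pmul:
  assumes fin: "finite (psupp p)" "finite (psupp q)"
  shows "psubst \<sigma> (pmul p q) = pmul (psubst \<sigma> p) (psubst \<sigma> q)"
proof
  fix u
  let ?A = "psupp p" and ?B = "psupp q" and ?W = "wprod \<sigma>"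
  let ?T = "(\<lambda>x. fst x @ snd x) ` (?A \<times> ?B)"
  have "psubst \<sigma> (pmul p q) u = (\<Sum>w\<in>?T. pmul p q w * ?W w u)"
    by (rule psubst_eq_sum) (use fin psupp_pmul_subset in auto)
  also have "\<dots> = (\<Sum>w\<in>?T. \<Sum>x\<in>{x\<in>?A \<times> ?B. fst x @ snd x = w}.
                      p (fst x) * q (snd x) * ?W (fst x @ snd x) u)"
    by (rule sum.cong[OF refl]) (simp add: pmul_eq_sum_pairs[OF fin] sum_distrib_right)
  also have "\<dots> = (\<Sum>x\<in>?A \<times> ?B. p (fst x) * q (snd x) * ?W (fst x @ snd x) u)"
    by (rule sum.group) (use fin in auto)
  also have "\<dots> = (\<Sum>(a, b)\<in>?A \<times> ?B. p a * q b * pmul (?W a) (?W b) u)"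
    by (simp add: wprod_append split_def)
  also have "\<dots> = pmul (\<lambda>v. \<Sum>a\<in>?A. p a * ?W a v) (\<lambda>v. \<Sum>b\<in>?B. q b * ?W b v) u"
    by (simp add: sum.cartesian_product[symmetric] pmul_sum_left pmul_sum_right
        pmul_smult_left pmul_smult_right sum_distrib_left mult.assoc)
  also have "\<dots> = pmul (psubst \<sigma> p) (psubst \<sigma> q) u"
    using fin by (simp add: psubst_eq_sum[symmetric])
  finally show "psubst \<sigma> (pmul p q) u = pmul (psubst \<sigma> p) (psubst \<sigma> q) u" .
qed

lemma psubst_diff:
  assumes "finite (psupp p)" "finite (psupp q)"
  shows "psubst \<sigma> (\<lambda>w. p w - q w) u = psubst \<sigma> p u - psubst \<sigma> q u"
proof -
  let ?T = "psupp p \<union> psupp q"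
  have "psubst \<sigma> (\<lambda>w. p w - q w) u = (\<Sum>w\<in>?T. (p w - q w) * wprod \<sigma> w u)"
    by (rule psubst_eq_sum) (use assms in \<open>auto simp: psupp_def\<close>)
  also have "\<dots> = psubst \<sigma> p u - psubst \<sigma> q u"
    using assms by (simp add: psubst_eq_sum[of ?T] sum_subtractf left_diff_distrib)
  finally show ?thesis .
qed

lemma psubst_pbr:
  assumes "finite (psupp p)" "finite (psupp q)"
  shows "psubst \<sigma> (pbr p q) = pbr (psubst \<sigma> p) (psubst \<sigma> q)"
  unfolding pbr_def
  by (rule ext) (simp add: psubst_diff finite_psupp_pmul assms psubst_pmul)

lemma psubst_pvar: "psubst \<sigma> (pvar x) = \<sigma> x"
proof
  fix u
  have "psubst \<sigma> (pvar x) u = (\<Sum>w\<in>{[x]}. pvar x w * wprod \<sigma> w u)"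
    by (rule psubst_eq_sum) (auto simp: psupp_def pvar_def)
  then show "psubst \<sigma> (pvar x) u = \<sigma> x u"
    by (simp add: pvar_def pmul_pone_right)
qed

lemma psubst_lnc_pvars: "psubst \<sigma> (lnc (map pvar xs)) = lnc (map \<sigma> xs)"
proof (cases xs)
  case Nil
  then show ?thesis by (simp add: psubst_def)
next
  case (Cons x xs')
  have "psubst \<sigma> (foldl pbr p (map pvar ys)) = foldl pbr (psubst \<sigma> p) (map \<sigma> ys)"
    if "finite (psupp p)" for p and ys :: "var list"
    using that by (induction ys arbitrary: p)
      (simp_all add: psubst_pbr psubst_pvar finite_psupp_pvar finite_psupp_pbr)
  then show ?thesis
    by (simp add: Cons finite_psupp_pvar psubst_pvar)
qed

lemma lnc_snoc: "L \<noteq> [] \<Longrightarrow> lnc (L @ [x]) = pbr (lnc L) x"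
  by (cases L) simp_all

lemma pbr_lnc_derivation:
  "pbr (lnc (a # as)) c = (\<lambda>w. \<Sum>j\<le>length as. lnc ((a # as)[j := pbr ((a # as) ! j) c]) w)"
proof (induction as rule: rev_induct)
  case (snoc x as)
  let ?upd = "\<lambda>L j. L[j := pbr (L ! j) c]"
  have upd_snoc: "lnc (?upd ((a # as) @ [x]) j) = pbr (lnc (?upd (a # as) j)) x"
    if "j \<le> length as" for j
  proof -
    have "?upd ((a # as) @ [x]) j = ?upd (a # as) j @ [x]"
      using that by (simp add: list_update_append1 nth_append del: append_Cons)
    then show ?thesis
      by (metis lnc_snoc list.distinct(1) list_update_nonempty)
  qed
  have "pbr (lnc ((a # as) @ [x])) c
      = padd (pbr (pbr (lnc (a # as)) c) x) (pbr (lnc (a # as)) (pbr x c))"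
    unfolding lnc_snoc[OF list.simps(3)] by (rule pbr_jacobi)
  also have "pbr (pbr (lnc (a # as)) c) x = (\<lambda>w. \<Sum>j\<le>length as. pbr (lnc (?upd (a # as) j)) x w)"
    unfolding snoc.IH by (rule pbr_sum_left)
  also have "\<dots> = (\<lambda>w. \<Sum>j\<le>length as. lnc (?upd ((a # as) @ [x]) j) w)"
    by (intro ext sum.cong) (simp_all only: upd_snoc atMost_iff)
  also have "pbr (lnc (a # as)) (pbr x c) = lnc (?upd ((a # as) @ [x]) (Suc (length as)))"
    by (simp add: list_update_append nth_append lnc_snoc del: append_Cons)
  finally show ?case
    by (simp add: padd_def)
qed simp

lemma lnc_insert_eq_sum:
  assumes "0 < m" "m \<le> length L"
  shows "lnc (take m L @ c # drop m L) = (\<lambda>w. \<Sum>j<m. lnc (L[j := pbr (L ! j) c]) w)"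
proof -
  obtain a as where a_as: "take m L = a # as"
    using assms by (cases "take m L") auto
  then have m: "m = Suc (length as)"
    using assms by (metis length_Cons length_take min.absorb2)
  have upd: "lnc (L[j := pbr (L ! j) c])
      = foldl pbr (lnc ((a # as)[j := pbr ((a # as) ! j) c])) (drop m L)" if "j < m" for j
  proof -
    have "L[j := pbr (L ! j) c] = (take m L)[j := pbr (take m L ! j) c] @ drop m L"
      using that assms
      by (metis append_take_drop_id length_take list_update_append1 min.absorb2 nth_append)
    then show ?thesis
      using that by (cases j) (simp_all add: a_as)
  qed
  have "lnc (take m L @ c # drop m L) = foldl pbr (pbr (lnc (a # as)) c) (drop m L)"
    by (simp add: a_as)
  also have "\<dots> = (\<lambda>w. \<Sum>j<m. lnc (L[j := pbr (L ! j) c]) w)"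
    unfolding pbr_lnc_derivation foldl_pbr_sum_left m lessThan_Suc_atMost
    using upd m by (intro ext sum.cong) auto
  finally show ?thesis .
qed

lemma is_Tideal_sum:
  assumes J: "is_Tideal n J" and f: "\<forall>j\<in>A. f j \<in> J"
  shows "(\<lambda>w. \<Sum>j\<in>A. f j w) \<in> J"
proof (cases "finite A")
  case True
  then show ?thesis
    using f
  proof (induction A rule: finite_induct)
    case (insert a A)
    then have "padd (f a) (\<lambda>w. \<Sum>j\<in>A. f j w) \<in> J"
      using J by (simp add: is_Tideal_def)
    then show ?case
      using insert.hyps by (simp add: padd_def)
  qed (use J in \<open>simp add: is_Tideal_def\<close>)
next
  case False
  then show ?thesis
    using J by (simp add: is_Tideal_def)
qed

definition bracket_subst :: "var \<Rightarrow> var \<Rightarrow> var \<Rightarrow> 'a::field ncpoly" where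
  "bracket_subst v y x = (if x = v then pbr (pvar v) (pvar y) else pvar x)"

lemma hcomp_pvar: "hcomp n (gdeg n x) (pvar x) = pvar x"
  by (rule ext) (auto simp: hcomp_def pvar_def wdeg_def gdeg_def)

lemma hcomp_pbr_pvar_degree_zero:
  assumes "gdeg n y = 0"
  shows "hcomp n (gdeg n v) (pbr (pvar v) (pvar y)) = (pbr (pvar v) (pvar y) :: 'a::field ncpoly)"
proof
  fix w
  have "(fst v + fst y) mod n = fst v mod n"
    using assms by (metis add.right_neutral gdeg_def mod_add_right_eq)
  then have deg: "wdeg n [v, y] = gdeg n v" "wdeg n [y, v] = gdeg n v"
    by (simp_all add: wdeg_def gdeg_def add.commute)
  have supp: "w = [v, y] \<or> w = [y, v]" if "pbr (pvar v) (pvar y) w \<noteq> (0 :: 'a)"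
  proof -
    have "pmul (pvar v) (pvar y) w \<noteq> (0 :: 'a) \<or> pmul (pvar y) (pvar v) w \<noteq> (0 :: 'a)"
      using that unfolding pbr_def by auto
    then show ?thesis
      by (auto dest!: pmul_nonzero_split simp: pvar_def split: if_splits)
  qed
  show "hcomp n (gdeg n v) (pbr (pvar v) (pvar y)) w = (pbr (pvar v) (pvar y) w :: 'a)"
    using supp deg by (cases "pbr (pvar v) (pvar y) w = (0 :: 'a)") (auto simp: hcomp_def)
qed

lemma graded_endo_bracket_subst:
  assumes "gdeg n y = 0"
  shows "graded_endo n (bracket_subst v y)"
  unfolding graded_endo_def bracket_subst_def
  using hcomp_pvar hcomp_pbr_pvar_degree_zero[OF assms] by (auto intro: LieP.intros)

lemma map_bracket_subst:
  assumes "distinct xs" "j < length xs"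
  shows "map (bracket_subst (xs ! j) y) xs = (map pvar xs)[j := pbr (map pvar xs ! j) (pvar y)]"
  by (rule nth_equalityI) (use assms in \<open>auto simp: bracket_subst_def nth_eq_iff_index_eq\<close>)

lemma lnc_insert_var_mem_Tideal:
  assumes J: "is_Tideal n J" and f: "lnc (map pvar xs) \<in> J"
    and xs: "distinct xs" and y: "gdeg n y = 0" and m: "0 < m" "m \<le> length xs"
  shows "lnc (take m (map pvar xs) @ pvar y # drop m (map pvar xs)) \<in> J"
proof -
  have "lnc ((map pvar xs)[j := pbr (map pvar xs ! j) (pvar y)]) \<in> J" if "j < m" for j
  proof -
    have "psubst (bracket_subst (xs ! j) y) (lnc (map pvar xs)) \<in> J"
      using J f graded_endo_bracket_subst[OF y] unfolding is_Tideal_def by blast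
    then show ?thesis
      using that m by (simp add: psubst_lnc_pvars map_bracket_subst[OF xs])
  qed
  then show ?thesis
    using m by (simp add: lnc_insert_eq_sum is_Tideal_sum[OF J])
qed

lemma distinct_concat_pairs:
  assumes "inj_on a {1..k}" "inj_on b {1..k}" "\<forall>j\<in>{1..k}. \<forall>l\<in>{1..k}. a j \<noteq> b l"
  shows "distinct (concat (map (\<lambda>j. [a j, b j]) [1..<k+1]))"
  using assms
proof (induction k)
  case (Suc k)
  have IH: "distinct (concat (map (\<lambda>j. [a j, b j]) [1..<k+1]))"
    using Suc by (simp add: inj_on_subset atLeastAtMostSuc_conv)
  have "set (concat (map (\<lambda>j. [a j, b j]) [1..<k+1])) = a ` {1..k} \<union> b ` {1..k}"
    by (auto simp: atLeastLessThanSuc_atLeastAtMost)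
  moreover have "a (Suc k) \<notin> a ` {1..k}" "b (Suc k) \<notin> b ` {1..k}"
    using inj_on_image_mem_iff[OF Suc.prems(1), of "Suc k" "{1..k}"]
      inj_on_image_mem_iff[OF Suc.prems(2), of "Suc k" "{1..k}"] by auto
  moreover have "a (Suc k) \<notin> b ` {1..k}" "b (Suc k) \<notin> a ` {1..k}" "a (Suc k) \<noteq> b (Suc k)"
    using Suc.prems(3) by force+
  ultimately show ?case using IH by auto
qed simp

lemma length_concat_pairs: "length (concat (map (\<lambda>j. [a j, b j]) xs)) = 2 * length xs"
  by (induction xs) auto

lemma concat_pairs_insert:
  assumes "1 \<le> i" "i \<le> k"
  shows "concat (map (\<lambda>j. if j = i then [a j, c, b j] else [a j, b j]) [1..<k+1])
       = take (2*i-1) (concat (map (\<lambda>j. [a j, b j]) [1..<k+1])) @ c #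
         drop (2*i-1) (concat (map (\<lambda>j. [a j, b j]) [1..<k+1]))"
proof -
  let ?P = "concat (map (\<lambda>j. [a j, b j]) [1..<i])"
  let ?R = "concat (map (\<lambda>j. [a j, b j]) [i+1..<k+1])"
  have "[1..<k+1] = [1..<i] @ [i..<k+1]"
    using upt_add_eq_append[of 1 i "k+1-i"] assms by simp
  also have "[i..<k+1] = i # [i+1..<k+1]"
    using assms by (simp add: upt_conv_Cons)
  finally have split: "[1..<k+1] = [1..<i] @ i # [i+1..<k+1]" .
  have pos: "2*i-1 = length ?P + 1"
    using assms by (simp add: length_concat_pairs)
  have below: "map (\<lambda>j. if j = i then [a j, c, b j] else [a j, b j]) [1..<i] = map (\<lambda>j. [a j, b j]) [1..<i]"
    by simp
  have above: "map (\<lambda>j. if j = i then [a j, c, b j] else [a j, b j]) [i+1..<k+1]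
      = map (\<lambda>j. [a j, b j]) [i+1..<k+1]"
    by simp
  have "concat (map (\<lambda>j. if j = i then [a j, c, b j] else [a j, b j]) [1..<k+1])
      = ?P @ [a i, c, b i] @ ?R"
    unfolding split map_append concat_append below list.map(2) concat.simps(2) above by simp
  moreover have "concat (map (\<lambda>j. [a j, b j]) [1..<k+1]) = ?P @ [a i, b i] @ ?R"
    unfolding split by simp
  ultimately show ?thesis
    unfolding pos by simp
qed

theorem mainTheorem12:
  fixes n k :: nat
    and g :: "nat \<Rightarrow> nat"
    and z yv :: "nat \<Rightarrow> var"
    and y :: var
    and i :: nat
  assumes "infinite (UNIV :: 'a::field set)"
    and "n \<ge> 2"
    and "\<forall>j\<in>{1..k}. g j \<in> {1..n-1} \<and> gdeg n (z j) = g j"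
    and "inj_on z {1..k}"
    and "(\<Sum>j=1..k. g j) \<le> n - 1"
    and "\<forall>j\<in>{1..k}. gdeg n (yv j) = 0"
    and "gdeg n y = 0"
    and "inj_on yv {1..k}" and "y \<notin> yv ` {1..k}"
    and "1 \<le> i" and "i \<le> k"
  shows "lnc (concat (map (\<lambda>j. if j = i then [pvar (z j), pvar y, pvar (yv j)]
                                 else [pvar (z j), pvar (yv j)]) [1..<k+1]))
         \<in> Tideal_gen n (insert (lnc (concat (map (\<lambda>j. [pvar (z j), pvar (yv j)]) [1..<k+1])))
                              (UT_ids n) :: 'a ncpoly set)"
proof -
  define xs where "xs = concat (map (\<lambda>j. [z j, yv j]) [1..<k+1])"
  have pvars: "concat (map (\<lambda>j. [pvar (z j), pvar (yv j)]) [1..<k+1]) = map pvar xs"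
    unfolding xs_def by (simp add: map_concat comp_def)
  have "length xs = 2 * k"
    unfolding xs_def by (simp add: length_concat_pairs)
  \<comment> \<open>each z j differs from each yv l since only the latter has degree 0\<close>
  moreover have "distinct xs"
    unfolding xs_def using assms(3,4,6,8) by (intro distinct_concat_pairs) fastforce+
  ultimately have "lnc (take (2*i-1) (map pvar xs) @ pvar y # drop (2*i-1) (map pvar xs)) \<in> J"
    if "is_Tideal n J" "lnc (map pvar xs) \<in> J" for J :: "'a ncpoly set"
    using that assms(7,10,11) by (intro lnc_insert_var_mem_Tideal) auto
  then show ?thesis
    unfolding concat_pairs_insert[OF assms(10,11)] pvars Tideal_gen_def by blast
qed

end
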